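(* Let $m\ge 1$, $n=3m$, and $t\ge 2$. Put $X_t=G_{n,t}\setminus a_{t-1}$ and $Y_t=X_t\setminus a_{t-2}$. Then $I(X_t)\simeq I(Y_t)$.
   Context: For a finite simple graph $G$, $I(G)$ is its independence complex (simplicial complex on $V(G)$ whose simplices are the independent sets); $G\setminus v$ is the induced subgraph on $V(G)\setminus\{v\}$. For integers $n\ge 2$, $t\ge 0$, the graph $G_{n,t}$ has vertex set $\{a_0,\dots,a_t\}\cup\{b_{i,j},c_{i,j}: 1\le i\le t,\ 1\le j\le n-1\}$, and its edges are exactly: $b_{i,j}\sim b_{i,j+1}$ and $c_{i,j}\sim c_{i,j+1}$ for $1\le i\le t$, $1\le j\le n-2$; $b_{i,n-1}\sim b_{i+1,1}$ and $c_{i,n-1}\sim c_{i+1,1}$ for $1\le i\le t-1$; and $a_{i-1}\sim b_{i,1}$, $a_{i-1}\sim c_{i,1}$, $a_i\sim b_{i,n-1}$, $a_i\sim c_{i,n-1}$ for $1\le i\le t$. *)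

theory Defs
  imports "HOL-Analysis.Analysis"
begin

text \<open>Finite simple graphs are given as a pair (vertex set, edge relation).
  Only edges between vertices of the vertex set are relevant.\<close>

type_synonym 'a graph = "'a set \<times> ('a \<Rightarrow> 'a \<Rightarrow> bool)"

definition verts :: "'a graph \<Rightarrow> 'a set" where "verts G = fst G"
definition adj :: "'a graph \<Rightarrow> 'a \<Rightarrow> 'a \<Rightarrow> bool" where
  "adj G x y = (x \<in> verts G \<and> y \<in> verts G \<and> snd G x y)"

definition del_vertex :: "'a graph \<Rightarrow> 'a \<Rightarrow> 'a graph" where
  "del_vertex G v = (verts G - {v}, \<lambda>x y. x \<noteq> v \<and> y \<noteq> v \<and> adj G x y)"

definition indep_complex :: "'a graph \<Rightarrow> 'a set set" where
  "indep_complex G = {S. finite S \<and> S \<subseteq> verts G \<and> (\<forall>x\<in>S. \<forall>y\<in>S. \<not> adj G x y)}"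

text \<open>Geometric realization of a simplicial complex K on a finite vertex set V:
  barycentric-coordinate functions V \<rightarrow> [0,1] summing to 1 whose support is a simplex,
  with the subspace topology of the product topology on R^V.\<close>
definition geom_real :: "'a set \<Rightarrow> 'a set set \<Rightarrow> ('a \<Rightarrow> real) topology" where
  "geom_real V K = subtopology (powertop_real V)
     {f \<in> topspace (powertop_real V). (\<forall>v\<in>V. 0 \<le> f v) \<and> sum f V = 1 \<and> {v\<in>V. f v \<noteq> 0} \<in> K}"

definition ind_space :: "'a graph \<Rightarrow> ('a \<Rightarrow> real) topology" where
  "ind_space G = geom_real (verts G) (indep_complex G)"

datatype vtx = A nat | B nat nat | C nat nat

definition G_verts :: "nat \<Rightarrow> nat \<Rightarrow> vtx set" where
  "G_verts n t = {A i | i. i \<le> t} \<union> {B i j | i j. 1 \<le> i \<and> i \<le> t \<and> 1 \<le> j \<and> j \<le> n - 1}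
     \<union> {C i j | i j. 1 \<le> i \<and> i \<le> t \<and> 1 \<le> j \<and> j \<le> n - 1}"

definition G_edge0 :: "nat \<Rightarrow> nat \<Rightarrow> vtx \<Rightarrow> vtx \<Rightarrow> bool" where
  "G_edge0 n t x y \<longleftrightarrow>
     (\<exists>i j. 1 \<le> i \<and> i \<le> t \<and> 1 \<le> j \<and> j \<le> n - 2 \<and>
        ((x = B i j \<and> y = B i (j+1)) \<or> (x = C i j \<and> y = C i (j+1)))) \<or>
     (\<exists>i. 1 \<le> i \<and> i \<le> t - 1 \<and>
        ((x = B i (n-1) \<and> y = B (i+1) 1) \<or> (x = C i (n-1) \<and> y = C (i+1) 1))) \<or>
     (\<exists>i. 1 \<le> i \<and> i \<le> t \<and>
        ((x = A (i-1) \<and> y = B i 1) \<or> (x = A (i-1) \<and> y = C i 1) \<or>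
         (x = A i \<and> y = B i (n-1)) \<or> (x = A i \<and> y = C i (n-1))))"

definition G_graph :: "nat \<Rightarrow> nat \<Rightarrow> vtx graph" where
  "G_graph n t = (G_verts n t, \<lambda>x y. G_edge0 n t x y \<or> G_edge0 n t y x)"

end

(*
  Deleting a_{t-1} from G_{n,t} leaves, besides the part left of a_{t-2}, two paths with
  2n - 2 = 6m - 2 inner vertices each from a_{t-2} to a_t. Two moves preserve the homotopy type
  of an independence complex: adding an edge vw when some u outside {v, w} has
  N(u) \<subseteq> N(v) \<union> N(w), and deleting a vertex v when N(u) \<subseteq> N(v) for some u \<noteq> v.
  Both are instances of deleting the open star of a face D all of whose cofaces are coned
  off by a vertex u. Adding, on both paths, the edges from a_{t-2} to the inner
  vertices 4, 7, ..., 6m - 2 (witnessed by the vertices 2, 5, ..., 6m - 4) makes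
  N(a_t) \<subseteq> N(a_{t-2}), so a_{t-2} can be folded away, and the added edges disappear with it.
*)
theory Submission
  imports Defs
begin

section \<open>Geometric realizations\<close>

definition geom_carrier :: "'a set \<Rightarrow> 'a set set \<Rightarrow> ('a \<Rightarrow> real) set" where
  "geom_carrier V K = {f \<in> topspace (powertop_real V).
     (\<forall>v\<in>V. 0 \<le> f v) \<and> sum f V = 1 \<and> {v\<in>V. f v \<noteq> 0} \<in> K}"

lemma geom_real_eq_subtopology: "geom_real V K = subtopology (powertop_real V) (geom_carrier V K)"
  unfolding geom_real_def geom_carrier_def by simp

lemma topspace_geom_real [simp]: "topspace (geom_real V K) = geom_carrier V K"
  unfolding geom_real_eq_subtopology by (auto simp: geom_carrier_def)

lemma geom_carrier_extensional: "f \<in> geom_carrier V K \<Longrightarrow> f \<in> extensional V"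
  by (auto simp: geom_carrier_def PiE_def)

lemma geom_carrier_mono: "K \<subseteq> K' \<Longrightarrow> geom_carrier V K \<subseteq> geom_carrier V K'"
  by (auto simp: geom_carrier_def)

lemma continuous_map_geom_real_coordinate:
  "x \<in> V \<Longrightarrow> continuous_map (geom_real V K) euclideanreal (\<lambda>f. f x)"
  unfolding geom_real_eq_subtopology
  by (intro continuous_map_from_subtopology continuous_map_product_projection)

lemma continuous_map_into_geom_real:
  assumes "\<And>x. x \<in> V \<Longrightarrow> continuous_map X euclideanreal (\<lambda>p. g p x)"
    and "\<And>p. p \<in> topspace X \<Longrightarrow> g p \<in> geom_carrier V K"
  shows "continuous_map X (geom_real V K) g"
  unfolding geom_real_eq_subtopology
proof (rule continuous_map_into_subtopology)
  show "continuous_map X (powertop_real V) g"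
    unfolding continuous_map_componentwise
    using assms geom_carrier_extensional by blast
qed (use assms in auto)

lemma continuous_map_Min:
  assumes "finite D" "D \<noteq> {}" "\<And>d. d \<in> D \<Longrightarrow> continuous_map X euclideanreal (f d)"
  shows "continuous_map X euclideanreal (\<lambda>x. Min ((\<lambda>d. f d x) ` D))"
  using assms by (induction D rule: finite_ne_induct) (auto intro: continuous_map_real_min)

text \<open>The hypothesis common_face keeps the straight-line homotopy from T to the identity inside
  the realization of K.\<close>
lemma geom_real_homotopy_equivalent_retract:
  fixes T :: "('a \<Rightarrow> real) \<Rightarrow> ('a \<Rightarrow> real)"
  assumes sub: "K' \<subseteq> K" and down: "\<And>S S'. S \<in> K \<Longrightarrow> S' \<subseteq> S \<Longrightarrow> S' \<in> K"
    and cont: "\<And>x. x \<in> V \<Longrightarrow> continuous_map (geom_real V K) euclideanreal (\<lambda>f. T f x)"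
    and into: "\<And>f. f \<in> geom_carrier V K \<Longrightarrow> T f \<in> geom_carrier V K'"
    and common_face: "\<And>f. f \<in> geom_carrier V K \<Longrightarrow> {x\<in>V. f x \<noteq> 0} \<union> {x\<in>V. T f x \<noteq> 0} \<in> K"
    and fixed: "\<And>f. f \<in> geom_carrier V K' \<Longrightarrow> T f = f"
  shows "geom_real V K homotopy_equivalent_space geom_real V K'"
proof -
  have carrier_sub: "geom_carrier V K' \<subseteq> geom_carrier V K"
    using sub by (rule geom_carrier_mono)
  have cont_T: "continuous_map (geom_real V K) (geom_real V K') T"
    using cont into by (intro continuous_map_into_geom_real) auto
  have cont_incl: "continuous_map (geom_real V K') (geom_real V K) id"
    using carrier_sub continuous_map_geom_real_coordinate
    by (intro continuous_map_into_geom_real) auto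
  have "homotopic_with (\<lambda>x. True) (geom_real V K') (geom_real V K') (T \<circ> id) id"
    by (rule homotopic_with_equal) (auto simp: fixed intro: continuous_map_eq[OF continuous_map_id])
  moreover have "homotopic_with (\<lambda>x. True) (geom_real V K) (geom_real V K) (id \<circ> T) id"
  proof -
    define h where "h = (\<lambda>(l::real, f). restrict (\<lambda>x. (1 - l) * T f x + l * f x) V)"
    let ?Z = "prod_topology (top_of_set {0..1}) (geom_real V K)"
    have "h (l, f) \<in> geom_carrier V K" if "l \<in> {0..1}" "f \<in> geom_carrier V K" for l f
    proof -
      have Tf: "T f \<in> geom_carrier V K" using into carrier_sub that by auto
      have "{x\<in>V. h (l, f) x \<noteq> 0} \<subseteq> {x\<in>V. f x \<noteq> 0} \<union> {x\<in>V. T f x \<noteq> 0}"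
        by (auto simp: h_def)
      then have "{x\<in>V. h (l, f) x \<noteq> 0} \<in> K" using down common_face that by blast
      moreover have "sum (h (l, f)) V = (1 - l) * sum (T f) V + l * sum f V"
        by (simp add: h_def sum.distrib sum_distrib_left)
      ultimately show ?thesis
        using Tf that by (auto simp: geom_carrier_def h_def)
    qed
    moreover have "continuous_map ?Z euclideanreal (\<lambda>p. h p x)" if "x \<in> V" for x
    proof -
      have T: "continuous_map ?Z euclideanreal (\<lambda>p. T (snd p) x)"
        using continuous_map_compose[OF continuous_map_snd cont[OF that]] by (simp add: o_def)
      have f: "continuous_map ?Z euclideanreal (\<lambda>p. snd p x)"
        using continuous_map_compose[OF continuous_map_snd continuous_map_geom_real_coordinate[OF that]]
        by (simp add: o_def)
      have l: "continuous_map ?Z euclideanreal (\<lambda>p. fst p)"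
        using continuous_map_compose[OF continuous_map_fst continuous_map_from_subtopology[OF continuous_map_id]]
        by (simp add: o_def)
      have "(\<lambda>p. h p x) = (\<lambda>p. (1 - fst p) * T (snd p) x + fst p * snd p x)"
        using that by (auto simp: h_def)
      then show ?thesis by (simp only:) (intro continuous_intros T f l)
    qed
    ultimately have "continuous_map ?Z (geom_real V K) h"
      by (intro continuous_map_into_geom_real) auto
    moreover have "h (0, f) = T f" "h (1, f) = f" if "f \<in> geom_carrier V K" for f
      using that into[OF that] geom_carrier_extensional[of f V K] geom_carrier_extensional[of "T f" V K']
      by (auto simp: h_def extensional_def)
    ultimately show ?thesis
      unfolding homotopic_with[where P="\<lambda>x. True", simplified] by auto
  qed
  ultimately show ?thesis
    unfolding homotopy_equivalent_space_def using cont_T cont_incl by blast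
qed

lemma geom_real_homeomorphic_del_unused_vertex:
  assumes "finite V" "v \<in> V" and unused: "\<And>S. S \<in> K \<Longrightarrow> v \<notin> S"
  shows "geom_real V K homeomorphic_space geom_real (V - {v}) K"
proof -
  define F where "F = (\<lambda>f::'a \<Rightarrow> real. restrict f (V - {v}))"
  define G where "G = (\<lambda>g::'a \<Rightarrow> real. restrict (\<lambda>x. if x = v then 0 else g x) V)"
  have zero_at_v: "f v = 0" if "f \<in> geom_carrier V K" for f
    using that unused[of "{x\<in>V. f x \<noteq> 0}"] assms by (auto simp: geom_carrier_def)
  have F_in: "F f \<in> geom_carrier (V - {v}) K" if f: "f \<in> geom_carrier V K" for f
  proof -
    have "sum f (V - {v}) = sum f V" using zero_at_v[OF f] assms by (simp add: sum_diff1)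
    moreover have "{x \<in> V - {v}. F f x \<noteq> 0} = {x\<in>V. f x \<noteq> 0}" using zero_at_v[OF f] by (auto simp: F_def)
    ultimately show ?thesis using f by (simp add: geom_carrier_def F_def)
  qed
  have G_in: "G g \<in> geom_carrier V K" if g: "g \<in> geom_carrier (V - {v}) K" for g
  proof -
    have "G g v = 0" using assms by (simp add: G_def)
    then have "sum (G g) V = sum (G g) (V - {v})" using assms by (simp add: sum_diff1)
    also have "\<dots> = sum g (V - {v})" by (rule sum.cong) (auto simp: G_def)
    finally have "sum (G g) V = 1" using g by (simp add: geom_carrier_def)
    moreover have "{x \<in> V. G g x \<noteq> 0} = {x \<in> V - {v}. g x \<noteq> 0}" by (auto simp: G_def)
    ultimately show ?thesis using g by (auto simp: geom_carrier_def G_def)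
  qed
  have "G (F f) = f" if "f \<in> geom_carrier V K" for f
    using zero_at_v[OF that] geom_carrier_extensional[OF that] by (auto simp: F_def G_def extensional_def)
  moreover have "F (G g) = g" if "g \<in> geom_carrier (V - {v}) K" for g
    using geom_carrier_extensional[OF that] by (auto simp: F_def G_def extensional_def)
  moreover have "continuous_map (geom_real V K) (geom_real (V - {v}) K) F"
    using F_in continuous_map_geom_real_coordinate
    by (intro continuous_map_into_geom_real) (auto simp: F_def)
  moreover have "continuous_map (geom_real (V - {v}) K) (geom_real V K) G"
    using G_in continuous_map_geom_real_coordinate
    by (intro continuous_map_into_geom_real) (auto simp: G_def intro!: continuous_map_geom_real_coordinate)
  ultimately show ?thesis
    unfolding homeomorphic_space_def homeomorphic_maps_def by (metis topspace_geom_real)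
qed

text \<open>The retraction moves the mass min_{d \<in> D} f d from each d \<in> D onto u.\<close>
lemma geom_real_homotopy_equivalent_del_open_star:
  assumes V: "finite V" "u \<in> V" "D \<subseteq> V" "D \<noteq> {}" "u \<notin> D"
    and down: "\<And>S S'. S \<in> K \<Longrightarrow> S' \<subseteq> S \<Longrightarrow> S' \<in> K"
    and cone: "\<And>S. S \<in> K \<Longrightarrow> D \<subseteq> S \<Longrightarrow> insert u S \<in> K"
  shows "geom_real V K homotopy_equivalent_space geom_real V {S \<in> K. \<not> D \<subseteq> S}"
proof -
  have D: "finite D" using V finite_subset by blast
  define a where "a = (\<lambda>f::'a \<Rightarrow> real. Min (f ` D))"
  define T where "T = (\<lambda>f. restrict (\<lambda>x. f x + a f * ((if x = u then real (card D) else 0)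
                                                      - (if x \<in> D then 1 else 0))) V)"
  have a_le: "a f \<le> f d" if "d \<in> D" for f d
    using that D by (simp add: a_def)
  have a_attained: "\<exists>d\<in>D. f d = a f" for f
  proof -
    have "a f \<in> f ` D" unfolding a_def using D V by (intro Min_in) auto
    then show ?thesis by auto
  qed
  have a_nonneg: "0 \<le> a f" if "f \<in> geom_carrier V K" for f
    using that a_attained[of f] V by (force simp: geom_carrier_def)
  have face: "{x\<in>V. f x \<noteq> 0} \<union> {x\<in>V. T f x \<noteq> 0} \<in> K" if f: "f \<in> geom_carrier V K" for f
  proof (cases "a f = 0")
    case True
    then have "{x\<in>V. T f x \<noteq> 0} = {x\<in>V. f x \<noteq> 0}" by (auto simp: T_def)
    then show ?thesis using f by (simp add: geom_carrier_def)
  next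
    case False
    then have "0 < f d" if "d \<in> D" for d
      using a_le[OF that, of f] a_nonneg[OF f] by linarith
    then have D_supp: "D \<subseteq> {x\<in>V. f x \<noteq> 0}" using V by force
    then have "insert u {x\<in>V. f x \<noteq> 0} \<in> K" using cone f by (simp add: geom_carrier_def)
    then show ?thesis by (rule down) (use D_supp V in \<open>auto simp: T_def\<close>)
  qed
  show ?thesis
  proof (rule geom_real_homotopy_equivalent_retract[where T=T])
    show "continuous_map (geom_real V K) euclideanreal (\<lambda>f. T f x)" if "x \<in> V" for x
    proof -
      define c where "c = (if x = u then real (card D) else 0) - (if x \<in> D then 1 else 0)"
      have "continuous_map (geom_real V K) euclideanreal a"
        unfolding a_def using D V
        by (intro continuous_map_Min) (auto intro: continuous_map_geom_real_coordinate)
      moreover have "(\<lambda>f. T f x) = (\<lambda>f. f x + a f * c)" using that by (simp add: T_def c_def)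
      ultimately show ?thesis
        using that by (simp only:) (intro continuous_intros continuous_map_geom_real_coordinate)
    qed
    show "T f \<in> geom_carrier V {S \<in> K. \<not> D \<subseteq> S}" if f: "f \<in> geom_carrier V K" for f
    proof -
      have "(\<Sum>x\<in>V. if x \<in> D then 1 else 0) = real (card D)"
        using V by (simp add: sum.If_cases Int_absorb1 Int_absorb2)
      then have "sum (T f) V = sum f V"
        using V by (simp add: T_def sum.distrib sum_subtractf flip: sum_distrib_left)
      moreover have "\<forall>x\<in>V. 0 \<le> T f x"
        using f a_le a_nonneg[OF f] V by (auto simp: T_def geom_carrier_def)
      moreover obtain d where d: "d \<in> D" "f d = a f" using a_attained by blast
      then have "T f d = 0" using V by (auto simp: T_def)
      then have "\<not> D \<subseteq> {x\<in>V. T f x \<noteq> 0}" using d(1) by blast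
      moreover have "{x\<in>V. T f x \<noteq> 0} \<in> K" using face[OF f] down by blast
      moreover have "T f \<in> extensional V" by (simp add: T_def)
      ultimately show ?thesis using f by (simp add: geom_carrier_def PiE_def)
    qed
    show "T f = f" if f: "f \<in> geom_carrier V {S \<in> K. \<not> D \<subseteq> S}" for f
    proof -
      have "\<not> D \<subseteq> {x\<in>V. f x \<noteq> 0}" using f by (simp add: geom_carrier_def)
      then obtain d where "d \<in> D" "f d = 0" using V by blast
      then have "a f \<le> 0" using a_le[of d f] by simp
      moreover have "f \<in> geom_carrier V K"
        using f geom_carrier_mono[of "{S \<in> K. \<not> D \<subseteq> S}" K V] by auto
      ultimately have "a f = 0" using a_nonneg by (simp add: order.antisym)
      then show ?thesis using geom_carrier_extensional[OF f] by (auto simp: T_def extensional_def)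
    qed
  qed (use face down in simp_all)
qed

section \<open>Independence complexes\<close>

definition add_edge :: "'a graph \<Rightarrow> 'a \<Rightarrow> 'a \<Rightarrow> 'a graph" where
  "add_edge G v w = (verts G, \<lambda>x y. snd G x y \<or> (x = v \<and> y = w) \<or> (x = w \<and> y = v))"

definition add_star :: "'a graph \<Rightarrow> 'a \<Rightarrow> 'a set \<Rightarrow> 'a graph" where
  "add_star G v W = (verts G, \<lambda>x y. snd G x y \<or> (x = v \<and> y \<in> W) \<or> (y = v \<and> x \<in> W))"

lemma verts_del_vertex [simp]: "verts (del_vertex G v) = verts G - {v}"
  by (simp add: del_vertex_def verts_def)

lemma adj_del_vertex: "adj (del_vertex G v) x y \<longleftrightarrow> x \<noteq> v \<and> y \<noteq> v \<and> adj G x y"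
  by (auto simp: adj_def del_vertex_def verts_def)

lemma verts_add_edge [simp]: "verts (add_edge G v w) = verts G"
  by (simp add: add_edge_def verts_def)

lemma adj_add_edge:
  "adj (add_edge G v w) x y \<longleftrightarrow>
     adj G x y \<or> (x \<in> verts G \<and> y \<in> verts G \<and> ((x = v \<and> y = w) \<or> (x = w \<and> y = v)))"
  by (auto simp: adj_def add_edge_def verts_def)

lemma verts_add_star [simp]: "verts (add_star G v W) = verts G"
  by (simp add: add_star_def verts_def)

lemma adj_add_star:
  "adj (add_star G v W) x y \<longleftrightarrow>
     adj G x y \<or> (x \<in> verts G \<and> y \<in> verts G \<and> ((x = v \<and> y \<in> W) \<or> (y = v \<and> x \<in> W)))"
  by (auto simp: adj_def add_star_def verts_def)

lemma adj_add_star_commute: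
  assumes "\<And>x y. adj G x y \<longleftrightarrow> adj G y x"
  shows "adj (add_star G v W) x y \<longleftrightarrow> adj (add_star G v W) y x"
  using assms by (auto simp: adj_add_star)

lemma add_star_empty [simp]: "add_star G v {} = G"
  by (simp add: add_star_def verts_def)

lemma add_star_insert: "add_star G v (insert w W) = add_edge (add_star G v W) v w"
  by (auto simp: add_star_def add_edge_def verts_def fun_eq_iff)

lemma del_vertex_add_star: "del_vertex (add_star G v W) v = del_vertex G v"
  by (auto simp: del_vertex_def adj_add_star fun_eq_iff)

lemma indep_complex_subset: "S \<in> indep_complex G \<Longrightarrow> S' \<subseteq> S \<Longrightarrow> S' \<in> indep_complex G"
  unfolding indep_complex_def by (auto intro: finite_subset)

lemma indep_complex_del_vertex:
  "indep_complex (del_vertex G v) = {S \<in> indep_complex G. \<not> {v} \<subseteq> S}"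
  by (auto simp: indep_complex_def adj_del_vertex)

lemma indep_complex_add_edge:
  "indep_complex (add_edge G v w) = {S \<in> indep_complex G. \<not> {v, w} \<subseteq> S}"
  by (auto simp: indep_complex_def adj_add_edge)

lemma ind_space_homotopy_equivalent_del_open_star:
  assumes "finite (verts G)" "u \<in> verts G" "D \<subseteq> verts G" "D \<noteq> {}" "u \<notin> D"
    and "\<not> adj G u u"
    and out: "\<And>x. adj G u x \<Longrightarrow> \<exists>d\<in>D. adj G d x"
    and "in": "\<And>x. adj G x u \<Longrightarrow> \<exists>d\<in>D. adj G x d"
  shows "ind_space G homotopy_equivalent_space
           geom_real (verts G) {S \<in> indep_complex G. \<not> D \<subseteq> S}"
  unfolding ind_space_def
proof (rule geom_real_homotopy_equivalent_del_open_star)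
  show "insert u S \<in> indep_complex G" if S: "S \<in> indep_complex G" "D \<subseteq> S" for S
  proof -
    have "\<not> adj G u y" "\<not> adj G y u" if "y \<in> S" for y
      using out[of y] "in"[of y] S that unfolding indep_complex_def by blast+
    then show ?thesis using S assms unfolding indep_complex_def by auto
  qed
qed (use assms in \<open>auto intro: indep_complex_subset\<close>)

lemma ind_space_homotopy_equivalent_del_vertex:
  assumes "finite (verts G)" "u \<in> verts G" "v \<in> verts G" "u \<noteq> v" "\<not> adj G u u"
    and "\<And>x. adj G u x \<Longrightarrow> adj G v x" "\<And>x. adj G x u \<Longrightarrow> adj G x v"
  shows "ind_space G homotopy_equivalent_space ind_space (del_vertex G v)"
proof -
  have "ind_space G homotopy_equivalent_space geom_real (verts G) (indep_complex (del_vertex G v))"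
    unfolding indep_complex_del_vertex
    by (rule ind_space_homotopy_equivalent_del_open_star[where u=u]) (use assms in auto)
  also have "\<dots> homotopy_equivalent_space ind_space (del_vertex G v)"
    unfolding ind_space_def verts_del_vertex
    by (intro homeomorphic_imp_homotopy_equivalent_space geom_real_homeomorphic_del_unused_vertex)
       (use assms in \<open>auto simp: indep_complex_def\<close>)
  finally show ?thesis .
qed

lemma ind_space_homotopy_equivalent_add_edge:
  assumes "finite (verts G)" "u \<in> verts G" "v \<in> verts G" "w \<in> verts G" "u \<noteq> v" "u \<noteq> w"
    and "\<not> adj G u u"
    and "\<And>x. adj G u x \<Longrightarrow> adj G v x \<or> adj G w x" "\<And>x. adj G x u \<Longrightarrow> adj G x v \<or> adj G x w"
  shows "ind_space G homotopy_equivalent_space ind_space (add_edge G v w)"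
  unfolding ind_space_def[of "add_edge G v w"] verts_add_edge indep_complex_add_edge
  by (rule ind_space_homotopy_equivalent_del_open_star[where u=u]) (use assms in auto)

section \<open>The graphs G_{n,t}\<close>

definition BC :: "bool \<Rightarrow> nat \<Rightarrow> nat \<Rightarrow> vtx" where
  "BC s i j = (if s then B i j else C i j)"

lemma BC_eq_iff [simp]: "BC s i j = BC s' i' j' \<longleftrightarrow> s = s' \<and> i = i' \<and> j = j'"
  by (auto simp: BC_def)

lemma BC_neq_A [simp]: "BC s i j \<noteq> A a" "A a \<noteq> BC s i j"
  by (auto simp: BC_def)

lemma vtx_BC_cases: obtains a where "x = A a" | s i j where "x = BC s i j"
  by (cases x) (metis, metis BC_def, metis BC_def)

lemma G_edge0_A_A [simp]: "\<not> G_edge0 n t (A a) (A b)"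
  by (auto simp: G_edge0_def)

lemma G_edge0_BC_A [simp]: "\<not> G_edge0 n t (BC s i j) (A a)"
  by (auto simp: G_edge0_def BC_def)

lemma G_edge0_A_BC [simp]:
  "G_edge0 n t (A a) (BC s i j) \<longleftrightarrow> 1 \<le> i \<and> i \<le> t \<and> ((a = i - 1 \<and> j = 1) \<or> (a = i \<and> j = n - 1))"
  by (cases s) (auto simp: G_edge0_def BC_def)

lemma G_edge0_BC_BC [simp]:
  "G_edge0 n t (BC s i j) (BC s' i' j') \<longleftrightarrow> s = s' \<and>
     ((1 \<le> i \<and> i \<le> t \<and> 1 \<le> j \<and> j \<le> n - 2 \<and> i' = i \<and> j' = j + 1) \<or>
      (1 \<le> i \<and> i \<le> t - 1 \<and> j = n - 1 \<and> i' = i + 1 \<and> j' = 1))"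
  by (cases s; cases s') (auto simp: G_edge0_def BC_def)

lemma A_in_G_verts [simp]: "A a \<in> G_verts n t \<longleftrightarrow> a \<le> t"
  by (auto simp: G_verts_def)

lemma BC_in_G_verts [simp]: "BC s i j \<in> G_verts n t \<longleftrightarrow> 1 \<le> i \<and> i \<le> t \<and> 1 \<le> j \<and> j \<le> n - 1"
  by (cases s) (auto simp: G_verts_def BC_def)

lemma finite_G_verts: "finite (G_verts n t)"
proof -
  have "G_verts n t \<subseteq> A ` {..t} \<union> (\<lambda>(s, i, j). BC s i j) ` (UNIV \<times> {..t} \<times> {..n})"
  proof
    fix x assume x: "x \<in> G_verts n t"
    show "x \<in> A ` {..t} \<union> (\<lambda>(s, i, j). BC s i j) ` (UNIV \<times> {..t} \<times> {..n})"
    proof (cases x rule: vtx_BC_cases)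
      case (2 s i j)
      then have "x = (\<lambda>(s, i, j). BC s i j) (s, i, j)" "(s, i, j) \<in> UNIV \<times> {..t} \<times> {..n}"
        using x by auto
      then show ?thesis by blast
    qed (use x in auto)
  qed
  then show ?thesis by (rule finite_subset) auto
qed

lemma verts_G_graph [simp]: "verts (G_graph n t) = G_verts n t"
  by (simp add: G_graph_def verts_def)

lemma adj_G_graph:
  "adj (G_graph n t) x y \<longleftrightarrow> x \<in> G_verts n t \<and> y \<in> G_verts n t \<and> (G_edge0 n t x y \<or> G_edge0 n t y x)"
  by (simp add: adj_def G_graph_def verts_def)

abbreviation X_graph :: "nat \<Rightarrow> nat \<Rightarrow> vtx graph" where
  "X_graph n t \<equiv> del_vertex (G_graph n t) (A (t - 1))"

lemma adj_del_vertex_G_graph: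
  "adj (del_vertex (G_graph n t) v) x y \<longleftrightarrow> x \<noteq> v \<and> y \<noteq> v \<and>
     x \<in> G_verts n t \<and> y \<in> G_verts n t \<and> (G_edge0 n t x y \<or> G_edge0 n t y x)"
  by (auto simp: adj_del_vertex adj_G_graph)

lemma adj_del_vertex_G_graph_commute:
  "adj (del_vertex (G_graph n t) v) x y \<longleftrightarrow> adj (del_vertex (G_graph n t) v) y x"
  unfolding adj_del_vertex_G_graph by auto

lemma not_adj_del_vertex_G_graph_self: "\<not> adj (del_vertex (G_graph n t) v) x x"
  by (cases x rule: vtx_BC_cases) (auto simp: adj_del_vertex_G_graph)

text \<open>Without a_{t-1}, the vertices b_{t-1,1}, ..., b_{t-1,n-1}, b_{t,1}, ..., b_{t,n-1} form a path
  from a_{t-2} to a_t, and likewise for c; arm n t s l is its l-th vertex, 1 \<le> l \<le> 2n - 2.\<close>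
definition arm :: "nat \<Rightarrow> nat \<Rightarrow> bool \<Rightarrow> nat \<Rightarrow> vtx" where
  "arm n t s l = (if l \<le> n - 1 then BC s (t - 1) l else BC s t (l - (n - 1)))"

lemma arm_eq_iff: "t \<ge> 1 \<Longrightarrow> arm n t s l = arm n t s' l' \<longleftrightarrow> s = s' \<and> l = l'"
  by (auto simp: arm_def split: if_splits)

lemma arm_neq_A [simp]: "arm n t s l \<noteq> A a" "A a \<noteq> arm n t s l"
  by (simp_all add: arm_def)

lemma arm_in_G_verts:
  "t \<ge> 2 \<Longrightarrow> 1 \<le> l \<Longrightarrow> l \<le> 2 * n - 2 \<Longrightarrow> arm n t s l \<in> G_verts n t"
  by (auto simp: arm_def)

lemma adj_arm_Suc:
  assumes "n \<ge> 3" "t \<ge> 2" "1 \<le> l" "l \<le> 2 * n - 3"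
  shows "adj (X_graph n t) (arm n t s l) (arm n t s (l + 1))"
  using assms by (auto simp: adj_del_vertex_G_graph arm_def)

lemma adj_arm_cases:
  assumes "n \<ge> 3" "t \<ge> 2" "2 \<le> l" "l \<le> 2 * n - 3" and "adj (X_graph n t) (arm n t s l) x"
  shows "x = arm n t s (l - 1) \<or> x = arm n t s (l + 1)"
proof (cases x rule: vtx_BC_cases)
  case (1 a)
  then show ?thesis
    using assms by (cases "l \<le> n - 1") (auto simp: adj_del_vertex_G_graph arm_def)
next
  case (2 s' i j)
  show ?thesis
  proof (cases "l \<le> n - 1")
    case True
    then have "s' = s \<and> ((i = t - 1 \<and> j = l + 1 \<and> l \<le> n - 2) \<or> (i = t \<and> j = 1 \<and> l = n - 1)
                  \<or> (i = t - 1 \<and> j = l - 1))"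
      using assms 2 by (auto simp: adj_del_vertex_G_graph arm_def)
    then show ?thesis using True assms 2 by (auto simp: arm_def)
  next
    case False
    then have "s' = s \<and> ((i = t \<and> j = l - (n - 1) + 1) \<or> (i = t \<and> j = l - (n - 1) - 1 \<and> l \<ge> n + 1)
                  \<or> (i = t - 1 \<and> j = n - 1 \<and> l = n))"
      using assms 2 by (auto simp: adj_del_vertex_G_graph arm_def)
    then show ?thesis using False assms 2 by (auto simp: arm_def)
  qed
qed

lemma adj_A_arm_1: "n \<ge> 3 \<Longrightarrow> t \<ge> 2 \<Longrightarrow> adj (X_graph n t) (A (t - 2)) (arm n t s 1)"
  by (auto simp: adj_del_vertex_G_graph arm_def)

lemma adj_A_last_arm:
  assumes "n \<ge> 3" "t \<ge> 2" "adj (X_graph n t) (A t) x"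
  shows "\<exists>s. x = arm n t s (2 * n - 2)"
proof (cases x rule: vtx_BC_cases)
  case (2 s i j)
  then have "i = t \<and> j = n - 1" using assms by (auto simp: adj_del_vertex_G_graph)
  then show ?thesis using 2 assms by (auto simp: arm_def)
qed (use assms in \<open>auto simp: adj_del_vertex_G_graph\<close>)

text \<open>Adding the edge from a_{t-2} to the (3j+1)-st vertex of an arm is a homotopy equivalence, with
  u the (3j-1)-st vertex: its neighbours are the (3j)-th vertex, adjacent to the new endpoint,
  and the (3j-2)-nd one, adjacent to a_{t-2} by an edge added before or, for j = 1, from the start.\<close>
lemma ind_space_add_star_insert_arm:
  assumes m: "m \<ge> 1" "n = 3 * m" "t \<ge> 2" and j: "1 \<le> j" "j \<le> 2 * m - 1"
    and u_notin: "arm n t s (3 * j - 1) \<notin> W"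
    and prev: "j = 1 \<or> arm n t s (3 * j - 2) \<in> W"
  shows "ind_space (add_star (X_graph n t) (A (t - 2)) W) homotopy_equivalent_space
         ind_space (add_star (X_graph n t) (A (t - 2)) (insert (arm n t s (3 * j + 1)) W))"
proof -
  let ?X = "X_graph n t" and ?v = "A (t - 2)"
  let ?H = "add_star ?X ?v W"
  define u where "u = arm n t s (3 * j - 1)"
  define w where "w = arm n t s (3 * j + 1)"
  have n: "n \<ge> 3" using m by simp
  have u_verts: "u \<in> verts ?X" and w_verts: "w \<in> verts ?X"
    unfolding u_def w_def using m j by (auto intro: arm_in_G_verts)
  have v_verts: "?v \<in> verts ?X" using m by simp
  have "u \<noteq> w" unfolding u_def w_def using m j by (simp add: arm_eq_iff)
  have nbrs_u: "adj ?H ?v x \<or> adj ?H w x" if "adj ?H u x" for x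
  proof -
    have "adj ?X u x"
      using that u_notin by (auto simp: adj_add_star u_def)
    moreover have "2 \<le> 3 * j - 1" "3 * j - 1 \<le> 2 * n - 3" using m j by auto
    ultimately have "x = arm n t s (3 * j - 1 - 1) \<or> x = arm n t s (3 * j - 1 + 1)"
      using adj_arm_cases[OF n m(3)] unfolding u_def by blast
    moreover have "3 * j - 1 - 1 = 3 * j - 2" "3 * j - 1 + 1 = 3 * j" using j by auto
    ultimately have "x = arm n t s (3 * j - 2) \<or> x = arm n t s (3 * j)" by simp
    then show ?thesis
    proof
      assume x: "x = arm n t s (3 * j - 2)"
      show ?thesis
      proof (cases "j = 1")
        case True
        then show ?thesis using x adj_A_arm_1[OF n m(3)] by (simp add: adj_add_star)
      next
        case False
        then have "x \<in> W" using prev x by simp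
        moreover have "x \<in> verts ?X" unfolding x using m j by (auto intro: arm_in_G_verts)
        ultimately show ?thesis using v_verts by (simp add: adj_add_star)
      qed
    next
      assume "x = arm n t s (3 * j)"
      then have "adj ?X w x"
        unfolding w_def using adj_arm_Suc[OF n m(3), of "3 * j" s] m j
        by (simp add: adj_del_vertex_G_graph_commute)
      then show ?thesis by (simp add: adj_add_star)
    qed
  qed
  have "ind_space ?H homotopy_equivalent_space ind_space (add_edge ?H ?v w)"
  proof (rule ind_space_homotopy_equivalent_add_edge[where u = u])
    show "\<not> adj ?H u u"
      using not_adj_del_vertex_G_graph_self u_notin by (auto simp: adj_add_star u_def)
    show "adj ?H ?v x \<or> adj ?H w x" if "adj ?H u x" for x
      using nbrs_u that .
    show "adj ?H x ?v \<or> adj ?H x w" if "adj ?H x u" for x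
      using nbrs_u[of x] that adj_add_star_commute[OF adj_del_vertex_G_graph_commute] by blast
  qed (use u_verts v_verts w_verts \<open>u \<noteq> w\<close> finite_G_verts in \<open>auto simp: u_def w_def\<close>)
  then show ?thesis by (simp add: add_star_insert w_def)
qed

definition rungs :: "nat \<Rightarrow> nat \<Rightarrow> nat \<Rightarrow> vtx set" where
  "rungs n t k = (\<Union>i\<in>{1..k}. {arm n t True (3 * i + 1), arm n t False (3 * i + 1)})"

lemma rungs_0 [simp]: "rungs n t 0 = {}"
  by (simp add: rungs_def)

lemma rungs_Suc:
  "rungs n t (Suc k) =
     insert (arm n t False (3 * Suc k + 1)) (insert (arm n t True (3 * Suc k + 1)) (rungs n t k))"
  by (auto simp: rungs_def atLeastAtMostSuc_conv)

lemma arm_in_rungs: "1 \<le> i \<Longrightarrow> i \<le> k \<Longrightarrow> arm n t s (3 * i + 1) \<in> rungs n t k"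
  by (cases s) (auto simp: rungs_def)

lemma arm_in_rungs_iff:
  "t \<ge> 1 \<Longrightarrow> arm n t s l \<in> rungs n t k \<longleftrightarrow> (\<exists>i. l = 3 * i + 1 \<and> 1 \<le> i \<and> i \<le> k)"
  by (auto simp: rungs_def arm_eq_iff arm_in_rungs)

lemma ind_space_add_star_rungs:
  assumes m: "m \<ge> 1" "n = 3 * m" "t \<ge> 2"
  shows "k \<le> 2 * m - 1 \<Longrightarrow> ind_space (X_graph n t) homotopy_equivalent_space
           ind_space (add_star (X_graph n t) (A (t - 2)) (rungs n t k))"
proof (induction k)
  case 0
  then show ?case by (simp add: homotopy_equivalent_space_refl)
next
  case (Suc k)
  let ?H = "\<lambda>W. ind_space (add_star (X_graph n t) (A (t - 2)) W)"
  have t: "t \<ge> 1" using m by simp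
  have mod3: "\<not> (\<exists>i. 3 * Suc k - 1 = 3 * i + 1)" by presburger
  have "?H (rungs n t k) homotopy_equivalent_space
        ?H (insert (arm n t True (3 * Suc k + 1)) (rungs n t k))"
    using Suc.prems mod3
    by (intro ind_space_add_star_insert_arm[OF m]) (auto simp: arm_in_rungs_iff[OF t])
  also have "\<dots> homotopy_equivalent_space ?H (rungs n t (Suc k))"
    unfolding rungs_Suc using Suc.prems mod3
    by (intro ind_space_add_star_insert_arm[OF m]) (auto simp: arm_in_rungs_iff[OF t] arm_eq_iff[OF t])
  finally show ?case using Suc by (auto intro: homotopy_eqv_trans)
qed

lemma adj_add_star_rungs_A_t:
  assumes "m \<ge> 1" "n = 3 * m" "t \<ge> 2"
    and "adj (add_star (X_graph n t) (A (t - 2)) (rungs n t (2 * m - 1))) (A t) x"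
  shows "adj (add_star (X_graph n t) (A (t - 2)) (rungs n t (2 * m - 1))) (A (t - 2)) x"
proof -
  let ?X = "X_graph n t"
  have n: "n \<ge> 3" using assms by simp
  have "A t \<noteq> A (t - 2)" "A t \<notin> rungs n t (2 * m - 1)" using assms by (auto simp: rungs_def)
  then have "adj ?X (A t) x" using assms(4) by (auto simp: adj_add_star)
  then obtain s where x: "x = arm n t s (2 * n - 2)"
    using adj_A_last_arm[OF n assms(3)] by blast
  have last: "2 * n - 2 = 3 * (2 * m - 1) + 1" using assms by simp
  have "x \<in> rungs n t (2 * m - 1)"
    unfolding x last using assms by (intro arm_in_rungs) auto
  moreover have "x \<in> verts ?X" unfolding x using assms by (auto intro: arm_in_G_verts)
  moreover have "A (t - 2) \<in> verts ?X" using assms by simp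
  ultimately show ?thesis by (simp add: adj_add_star)
qed

theorem lemma3p13:
  fixes m n t :: nat
  assumes "m \<ge> 1" and "n = 3 * m" and "t \<ge> 2"
  shows "ind_space (del_vertex (G_graph n t) (A (t - 1)))
           homotopy_equivalent_space
         ind_space (del_vertex (del_vertex (G_graph n t) (A (t - 1))) (A (t - 2)))"
proof -
  let ?X = "X_graph n t" and ?v = "A (t - 2)"
  let ?H = "add_star ?X ?v (rungs n t (2 * m - 1))"
  have "ind_space ?X homotopy_equivalent_space ind_space ?H"
    using assms by (intro ind_space_add_star_rungs) auto
  also have "\<dots> homotopy_equivalent_space ind_space (del_vertex ?H ?v)"
  proof (rule ind_space_homotopy_equivalent_del_vertex[where u = "A t"])
    show "adj ?H ?v x" if "adj ?H (A t) x" for x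
      using adj_add_star_rungs_A_t[OF assms that] .
    then show "adj ?H x ?v" if "adj ?H x (A t)" for x
      using that adj_add_star_commute[OF adj_del_vertex_G_graph_commute] by blast
  qed (use assms not_adj_del_vertex_G_graph_self finite_G_verts in \<open>auto simp: adj_add_star rungs_def\<close>)
  finally show ?thesis by (simp only: del_vertex_add_star)
qed

end
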